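(* Let $N\ge2$, let $W_1,\dots,W_N\in\mathbb{R}^{p\times q}$, $X_1,\dots,X_N\in\mathbb{R}^{q\times r}$, $\widetilde X_1,\dots,\widetilde X_N\in\mathbb{R}^{p\times\widetilde q}$ and $V_1,\dots,V_N\in\mathbb{R}^{\widetilde q\times r}$ be matrices, $\bar X=\frac1N\sum_kX_k$, $\bar{\widetilde X}=\frac1N\sum_k\widetilde X_k$. For a permutation $\pi$ of $[N]$ and $k\in[N]$ define \[\Sigma^\pi_{\ge k}=\frac1{N+1-k}\sum_{i=k}^N(X_{\pi(i)}-\bar X)(X_{\pi(i)}-\bar X)^\top,\qquad\widetilde\Sigma^\pi_{\ge k}=\frac1{N+1-k}\sum_{i=k}^N(\widetilde X_{\pi(i)}-\bar{\widetilde X})^\top(\widetilde X_{\pi(i)}-\bar{\widetilde X}).\] Then, with $\mathscr{S}_N$ the set of permutations of $[N]$, in the positive semidefinite order, \[ \frac1{N!}\sum_{\pi\in\mathscr{S}_N}\sum_{k=1}^NW_{\pi(k)}\Sigma^\pi_{\ge k}W_{\pi(k)}^\top\preceq\frac{\widetilde\sigma^2_X}{1+\epsilon_N}\sum_{k=1}^NW_kW_k^\top,\qquad\frac1{N!}\sum_{\pi\in\mathscr{S}_N}\sum_{k=1}^NV_{\pi(k)}^\top\widetilde\Sigma^\pi_{\ge k}V_{\pi(k)}\preceq\frac{\widetilde\sigma^2_{\widetilde X}}{1+\epsilon_N}\sum_{k=1}^NV_k^\top V_k. \]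
   Context: $\|\cdot\|$ is the operator norm. $\Sigma=\frac1N\sum_k(X_k-\bar X)(X_k-\bar X)^\top$, $\widetilde\Sigma=\frac1N\sum_k(\widetilde X_k-\bar{\widetilde X})^\top(\widetilde X_k-\bar{\widetilde X})$, $\widetilde\sigma^2_X=\|\Sigma\|+\epsilon_N\max_k\|X_k-\bar X\|^2$, $\widetilde\sigma^2_{\widetilde X}=\|\widetilde\Sigma\|+\epsilon_N\max_k\|\widetilde X_k-\bar{\widetilde X}\|^2$. $H_n=\sum_{j\le n}\frac1j$, $\epsilon_n=\frac{H_n-1}{n-H_n}$ for $n\ge2$. *)

theory Defs
  imports "HOL-Analysis.Analysis"
begin

definition opnorm :: "real^'n^'m \<Rightarrow> real" where
  "opnorm A = onorm (\<lambda>v. A *v v)"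

definition psd :: "real^'n^'n \<Rightarrow> bool" where
  "psd M \<longleftrightarrow> transpose M = M \<and> (\<forall>x. 0 \<le> x \<bullet> (M *v x))"

definition loewner_le :: "real^'n^'n \<Rightarrow> real^'n^'n \<Rightarrow> bool" where
  "loewner_le A B \<longleftrightarrow> psd (B - A)"

definition eps_N :: "nat \<Rightarrow> real" where
  "eps_N n = (harm n - 1) / (real n - harm n)"

definition mat_mean :: "nat \<Rightarrow> (nat \<Rightarrow> real^'b^'a) \<Rightarrow> real^'b^'a" where
  "mat_mean N X = (1 / real N) *\<^sub>R (\<Sum>k=1..N. X k)"

definition Sigma_l :: "nat \<Rightarrow> (nat \<Rightarrow> real^'b^'a) \<Rightarrow> real^'a^'a" where
  "Sigma_l N X = (1 / real N) *\<^sub>R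
     (\<Sum>k=1..N. (X k - mat_mean N X) ** transpose (X k - mat_mean N X))"

definition Sigma_r :: "nat \<Rightarrow> (nat \<Rightarrow> real^'b^'a) \<Rightarrow> real^'b^'b" where
  "Sigma_r N X = (1 / real N) *\<^sub>R
     (\<Sum>k=1..N. transpose (X k - mat_mean N X) ** (X k - mat_mean N X))"

definition sigma2_l :: "nat \<Rightarrow> (nat \<Rightarrow> real^'b^'a) \<Rightarrow> real" where
  "sigma2_l N X = opnorm (Sigma_l N X)
     + eps_N N * Max ((\<lambda>k. (opnorm (X k - mat_mean N X))^2) ` {1..N})"

definition sigma2_r :: "nat \<Rightarrow> (nat \<Rightarrow> real^'b^'a) \<Rightarrow> real" where
  "sigma2_r N X = opnorm (Sigma_r N X)
     + eps_N N * Max ((\<lambda>k. (opnorm (X k - mat_mean N X))^2) ` {1..N})"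

definition SigmaPi_l :: "nat \<Rightarrow> (nat \<Rightarrow> real^'b^'a) \<Rightarrow> (nat \<Rightarrow> nat) \<Rightarrow> nat \<Rightarrow> real^'a^'a" where
  "SigmaPi_l N X \<pi> k = (1 / real (N + 1 - k)) *\<^sub>R
     (\<Sum>i=k..N. (X (\<pi> i) - mat_mean N X) ** transpose (X (\<pi> i) - mat_mean N X))"

definition SigmaPi_r :: "nat \<Rightarrow> (nat \<Rightarrow> real^'b^'a) \<Rightarrow> (nat \<Rightarrow> nat) \<Rightarrow> nat \<Rightarrow> real^'b^'b" where
  "SigmaPi_r N X \<pi> k = (1 / real (N + 1 - k)) *\<^sub>R
     (\<Sum>i=k..N. transpose (X (\<pi> i) - mat_mean N X) ** (X (\<pi> i) - mat_mean N X))"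

end

theory Submission
  imports Defs
begin

(* For a uniformly random permutation pi, pi k is uniform on {1..N} and, for i > k, the pair
   (pi k, pi i) is uniform on the ordered pairs of distinct indices.  Expanding Sigma^pi_{>=k}
   and using sum_k 1/(N+1-k) = H_N, the averaged left-hand side therefore equals
     ((H_N - 1) sum_j W_j Y_j W_j^T + (N - H_N) sum_j W_j Sigma W_j^T) / (N - 1)
   with Y_j = (X_j - Xbar)(X_j - Xbar)^T.  Bounding every Y_j by max_l ||X_l - Xbar||^2 and
   Sigma by ||Sigma|| in the Loewner order gives the claim, because
   eps_N / (1 + eps_N) = (H_N - 1) / (N - 1) and 1 / (1 + eps_N) = (N - H_N) / (N - 1).
   The second inequality is the first one for the transposed matrices. *)

lemma sum_permutations_apply:
  fixes h :: "'a \<Rightarrow> real"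
  assumes fin: "finite S" and k: "k \<in> S"
  shows "(\<Sum>\<pi>\<in>{\<pi>. \<pi> permutes S}. h (\<pi> k)) = fact (card S - 1) * (\<Sum>j\<in>S. h j)"
proof -
  let ?P = "{\<pi>. \<pi> permutes S}"
  have same: "(\<Sum>\<pi>\<in>?P. h (\<pi> k')) = (\<Sum>\<pi>\<in>?P. h (\<pi> k))" if "k' \<in> S" for k'
    using sum_permutations_compose_right[OF permutes_swap_id[OF that k], of "\<lambda>\<pi>. h (\<pi> k')"]
    by simp
  have "real (card S) * (\<Sum>\<pi>\<in>?P. h (\<pi> k)) = (\<Sum>k'\<in>S. \<Sum>\<pi>\<in>?P. h (\<pi> k'))"
    using same by simp
  also have "\<dots> = (\<Sum>\<pi>\<in>?P. \<Sum>k'\<in>S. h (\<pi> k'))"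
    by (rule sum.swap)
  also have "\<dots> = (\<Sum>\<pi>\<in>?P. \<Sum>j\<in>S. h j)"
  proof (rule sum.cong[OF refl])
    fix \<pi> assume "\<pi> \<in> ?P"
    then show "(\<Sum>k'\<in>S. h (\<pi> k')) = (\<Sum>j\<in>S. h j)"
      using sum.permute[of \<pi> S h] by (simp add: comp_def)
  qed
  also have "\<dots> = real (card S) * (fact (card S - 1) * (\<Sum>j\<in>S. h j))"
  proof -
    have "card S > 0" using fin k by (auto simp: card_gt_0_iff)
    then have "(fact (card S) :: real) = real (card S) * fact (card S - 1)"
      by (rule fact_reduce)
    then show ?thesis
      using card_permutations[OF refl fin] by simp
  qed
  finally show ?thesis
    using fin k by (auto simp: card_gt_0_iff)
qed

lemma sum_permutations_apply_pair:
  fixes g :: "'a \<Rightarrow> 'a \<Rightarrow> real"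
  assumes fin: "finite S" and k: "k \<in> S" and i: "i \<in> S" and "k \<noteq> i"
  shows "(\<Sum>\<pi>\<in>{\<pi>. \<pi> permutes S}. g (\<pi> k) (\<pi> i))
     = fact (card S - 2) * ((\<Sum>j\<in>S. \<Sum>l\<in>S. g j l) - (\<Sum>j\<in>S. g j j))"
proof -
  let ?P = "{\<pi>. \<pi> permutes S}"
  have same: "(\<Sum>\<pi>\<in>?P. g (\<pi> k) (\<pi> i')) = (\<Sum>\<pi>\<in>?P. g (\<pi> k) (\<pi> i))" if "i' \<in> S - {k}" for i'
  proof -
    have "Transposition.transpose i' i k = k" using that \<open>k \<noteq> i\<close> by auto
    then show ?thesis
      using sum_permutations_compose_right[OF permutes_swap_id, of i' S i "\<lambda>\<pi>. g (\<pi> k) (\<pi> i')"]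
        that i by simp
  qed
  have card: "card S \<ge> 2"
    using card_mono[OF fin, of "{k, i}"] k i \<open>k \<noteq> i\<close> by simp
  have "real (card S - 1) * (\<Sum>\<pi>\<in>?P. g (\<pi> k) (\<pi> i)) = (\<Sum>i'\<in>S-{k}. \<Sum>\<pi>\<in>?P. g (\<pi> k) (\<pi> i'))"
    using same fin k by simp
  also have "\<dots> = (\<Sum>\<pi>\<in>?P. \<Sum>i'\<in>S-{k}. g (\<pi> k) (\<pi> i'))"
    by (rule sum.swap)
  also have "\<dots> = (\<Sum>\<pi>\<in>?P. (\<Sum>l\<in>S. g (\<pi> k) l) - g (\<pi> k) (\<pi> k))"
  proof (intro sum.cong refl)
    fix \<pi> assume "\<pi> \<in> ?P"
    then have "(\<Sum>i'\<in>S. g (\<pi> k) (\<pi> i')) = (\<Sum>l\<in>S. g (\<pi> k) l)"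
      using sum.permute[of \<pi> S "g (\<pi> k)"] by (simp add: comp_def)
    then show "(\<Sum>i'\<in>S-{k}. g (\<pi> k) (\<pi> i')) = (\<Sum>l\<in>S. g (\<pi> k) l) - g (\<pi> k) (\<pi> k)"
      using fin k by (simp add: sum_diff1)
  qed
  also have "\<dots> = fact (card S - 1) * ((\<Sum>j\<in>S. \<Sum>l\<in>S. g j l) - (\<Sum>j\<in>S. g j j))"
    using sum_permutations_apply[OF fin k, of "\<lambda>j. \<Sum>l\<in>S. g j l"]
      sum_permutations_apply[OF fin k, of "\<lambda>j. g j j"]
    by (simp add: sum_subtractf right_diff_distrib)
  also have "\<dots> = real (card S - 1) * (fact (card S - 2) * ((\<Sum>j\<in>S. \<Sum>l\<in>S. g j l) - (\<Sum>j\<in>S. g j j)))"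
    using card fact_reduce[of "card S - 1", where 'a=real] by (simp add: numeral_2_eq_2)
  finally show ?thesis
    using card by simp
qed

lemma sum_permutations_suffix:
  fixes g :: "nat \<Rightarrow> nat \<Rightarrow> real"
  assumes k: "k \<in> {1..N}"
  shows "(\<Sum>\<pi>\<in>{\<pi>. \<pi> permutes {1..N}}. \<Sum>i=k..N. g (\<pi> k) (\<pi> i))
    = fact (N - 1) * (\<Sum>j=1..N. g j j)
      + real (N - k) * (fact (N - 2) * ((\<Sum>j=1..N. \<Sum>l=1..N. g j l) - (\<Sum>j=1..N. g j j)))"
proof -
  let ?P = "{\<pi>. \<pi> permutes {1..N}}"
  have "(\<Sum>\<pi>\<in>?P. \<Sum>i=k..N. g (\<pi> k) (\<pi> i)) = (\<Sum>i=k..N. \<Sum>\<pi>\<in>?P. g (\<pi> k) (\<pi> i))"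
    by (rule sum.swap)
  also have "\<dots> = (\<Sum>\<pi>\<in>?P. g (\<pi> k) (\<pi> k)) + (\<Sum>i=Suc k..N. \<Sum>\<pi>\<in>?P. g (\<pi> k) (\<pi> i))"
    using k by (intro sum.atLeast_Suc_atMost) auto
  also have "(\<Sum>\<pi>\<in>?P. g (\<pi> k) (\<pi> k)) = fact (N - 1) * (\<Sum>j=1..N. g j j)"
    using sum_permutations_apply[of "{1..N}" k "\<lambda>j. g j j"] k by simp
  also have "(\<Sum>i=Suc k..N. \<Sum>\<pi>\<in>?P. g (\<pi> k) (\<pi> i))
      = (\<Sum>i=Suc k..N. fact (N - 2) * ((\<Sum>j=1..N. \<Sum>l=1..N. g j l) - (\<Sum>j=1..N. g j j)))"
    using sum_permutations_apply_pair[of "{1..N}" k _ g] k by (intro sum.cong) auto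
  finally show ?thesis
    by simp
qed

lemma harm_ge_one: "n \<ge> 1 \<Longrightarrow> (1 :: real) \<le> harm n"
  using harm_mono[of 1 n] by (simp add: harm_def)

lemma harm_less_of_nat: "n \<ge> 2 \<Longrightarrow> harm n < (real n :: real)"
proof (induction n rule: nat_induct_at_least)
  case base
  then show ?case by (simp add: harm_def numeral_2_eq_2)
next
  case (Suc n)
  moreover have "inverse (real (Suc n)) \<le> 1"
    by (simp add: inverse_le_1_iff)
  ultimately show ?case
    by (simp add: harm_Suc)
qed

lemma sum_suffix_weights:
  "(\<Sum>k=1..N. (a + real (N - k) * b) / real (N + 1 - k)) = harm N * a + (real N - harm N) * b"
proof -
  have "(\<Sum>k=1..N. (a + real (N - k) * b) / real (N + 1 - k))
      = (\<Sum>k=1..N. b + (a - b) * inverse (real (N + 1 - k)))"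
    by (rule sum.cong) (auto simp: of_nat_diff field_simps)
  also have "\<dots> = real N * b + (a - b) * (\<Sum>k=1..N. inverse (real (N + 1 - k)))"
    by (simp add: sum.distrib sum_distrib_left)
  also have "(\<Sum>k=1..N. inverse (real (N + 1 - k))) = (\<Sum>k=1..N. inverse (real k))"
    by (subst sum.atLeastAtMost_rev) (auto intro: sum.cong)
  finally show ?thesis
    by (simp add: harm_def algebra_simps)
qed

lemma permutation_average_suffix_means:
  fixes g :: "nat \<Rightarrow> nat \<Rightarrow> real"
  assumes N: "N \<ge> 2"
  shows "(1 / fact N) * (\<Sum>\<pi>\<in>{\<pi>. \<pi> permutes {1..N}}. \<Sum>k=1..N.
            (1 / real (N + 1 - k)) * (\<Sum>i=k..N. g (\<pi> k) (\<pi> i)))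
    = ((harm N - 1) * (\<Sum>j=1..N. g j j)
        + (real N - harm N) * ((\<Sum>j=1..N. \<Sum>l=1..N. g j l) / real N)) / (real N - 1)"
proof -
  let ?S = "\<Sum>\<pi>\<in>{\<pi>. \<pi> permutes {1..N}}. \<Sum>k=1..N. (1 / real (N + 1 - k)) * (\<Sum>i=k..N. g (\<pi> k) (\<pi> i))"
  define D where "D = (\<Sum>j=1..N. g j j)"
  define T where "T = (\<Sum>j=1..N. \<Sum>l=1..N. g j l)"
  define f where "f = (fact (N - 2) :: real)"
  have fact_N: "fact N = real N * (real N - 1) * f" and fact_N1: "fact (N - 1) = (real N - 1) * f"
    using N by (auto simp: f_def fact_reduce of_nat_diff numeral_2_eq_2 diff_diff_add)
  have "?S = (\<Sum>k=1..N. (fact (N - 1) * D + real (N - k) * (f * (T - D))) / real (N + 1 - k))"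
  proof (subst sum.swap, rule sum.cong[OF refl])
    fix k assume k: "k \<in> {1..N}"
    show "(\<Sum>\<pi>\<in>{\<pi>. \<pi> permutes {1..N}}. (1 / real (N + 1 - k)) * (\<Sum>i=k..N. g (\<pi> k) (\<pi> i)))
        = (fact (N - 1) * D + real (N - k) * (f * (T - D))) / real (N + 1 - k)"
      using sum_permutations_suffix[OF k, of g]
      unfolding sum_distrib_left[symmetric] D_def[symmetric] T_def[symmetric] f_def[symmetric]
      by simp
  qed
  also have "\<dots> = harm N * (fact (N - 1) * D) + (real N - harm N) * (f * (T - D))"
    by (rule sum_suffix_weights)
  finally have S: "?S = f * (harm N * (real N - 1) * D + (real N - harm N) * (T - D))"
    unfolding fact_N1 by (simp add: algebra_simps)
  have "f > 0" "real N > 1"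
    using N by (auto simp: f_def)
  then show ?thesis
    unfolding D_def[symmetric] T_def[symmetric] S fact_N by (simp add: field_simps)
qed

lemma eps_N_weighted_mean:
  assumes "N \<ge> 2"
  shows "(s + eps_N N * M) / (1 + eps_N N)
       = ((harm N - 1) * M + (real N - harm N) * s) / (real N - 1)"
proof -
  define d where "d = real N - harm N"
  have d: "d > 0"
    using harm_less_of_nat[OF assms] by (simp add: d_def)
  have "1 + eps_N N = (real N - 1) / d"
    using d by (simp add: eps_N_def d_def field_simps)
  moreover have "s + eps_N N * M = ((harm N - 1) * M + d * s) / d"
    using d by (simp add: eps_N_def d_def field_simps)
  ultimately show ?thesis
    using d by (simp add: d_def)
qed

definition qform :: "real^'n^'n \<Rightarrow> real^'n \<Rightarrow> real" where
  "qform M x = x \<bullet> (M *v x)"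

lemma qform_scaleR [simp]: "qform (c *\<^sub>R A) x = c * qform A x"
  by (simp add: qform_def scaleR_matrix_vector_assoc[symmetric])

lemma qform_sum [simp]: "qform (sum f S) x = (\<Sum>i\<in>S. qform (f i) x)"
  by (induction S rule: infinite_finite_induct)
    (auto simp: qform_def matrix_vector_mult_add_rdistrib inner_add_right)

lemma qform_congruence [simp]: "qform (B ** Y ** transpose B) x = qform Y (transpose B *v x)"
  by (simp add: qform_def matrix_vector_mul_assoc[symmetric] dot_lmul_matrix[symmetric])

lemma qform_gram: "qform (B ** transpose B) x = (norm (transpose B *v x))\<^sup>2"
  by (simp add: qform_def matrix_vector_mul_assoc[symmetric] dot_lmul_matrix[symmetric]
      power2_norm_eq_inner)

lemma transpose_sum: "transpose (sum f S) = (\<Sum>i\<in>S. transpose (f i))"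
  by (simp add: transpose_def vec_eq_iff sum_component)

lemma transpose_diff: "transpose (A - B) = transpose A - transpose B"
  by (simp add: transpose_def vec_eq_iff)

lemma loewner_le_qformI:
  assumes "transpose A = A" and "transpose B = B" and "\<And>x. qform A x \<le> qform B x"
  shows "loewner_le A B"
  using assms unfolding loewner_le_def psd_def
  by (simp add: qform_def transpose_diff matrix_vector_mult_diff_rdistrib inner_diff_right)

lemma norm_mult_vec_le_opnorm: "norm (A *v v) \<le> opnorm A * norm v"
  unfolding opnorm_def by (rule onorm[OF matrix_vector_mul_bounded_linear])

lemma opnorm_transpose_le: "opnorm (transpose A) \<le> opnorm A"
  unfolding opnorm_def
proof (rule onorm_le)
  fix v
  show "norm (transpose A *v v) \<le> onorm ((*v) A) * norm v"
  proof (cases "transpose A *v v = 0")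
    case True
    then show ?thesis
      using onorm_pos_le[OF matrix_vector_mul_bounded_linear, of A] by simp
  next
    case False
    have "(norm (transpose A *v v))\<^sup>2 = v \<bullet> (A *v (transpose A *v v))"
      by (simp add: dot_lmul_matrix[symmetric] power2_norm_eq_inner)
    also have "\<dots> \<le> norm v * (opnorm A * norm (transpose A *v v))"
      by (intro order.trans[OF norm_cauchy_schwarz] mult_left_mono norm_mult_vec_le_opnorm) simp
    finally show ?thesis
      using False by (simp add: opnorm_def power2_eq_square mult.commute mult.left_commute)
  qed
qed

lemma opnorm_transpose: "opnorm (transpose A) = opnorm A"
  using opnorm_transpose_le[of A] opnorm_transpose_le[of "transpose A"] by simp

lemma qform_le_opnorm: "qform S y \<le> opnorm S * (norm y)\<^sup>2"
proof -
  have "qform S y \<le> norm y * norm (S *v y)"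
    unfolding qform_def by (rule norm_cauchy_schwarz)
  also have "\<dots> \<le> norm y * (opnorm S * norm y)"
    by (intro mult_left_mono norm_mult_vec_le_opnorm) simp
  finally show ?thesis
    by (simp add: power2_eq_square algebra_simps)
qed

lemma qform_gram_le_opnorm: "qform (A ** transpose A) y \<le> (opnorm A)\<^sup>2 * (norm y)\<^sup>2"
proof -
  have "norm (transpose A *v y) \<le> opnorm A * norm y"
    using norm_mult_vec_le_opnorm[of "transpose A"] by (simp add: opnorm_transpose)
  then show ?thesis
    unfolding qform_gram power_mult_distrib[symmetric] by (intro power_mono) simp_all
qed

lemma loewner_le_permutation_suffix_average:
  fixes B :: "nat \<Rightarrow> real^'q^'p" and Y :: "nat \<Rightarrow> real^'q^'q" and S :: "real^'q^'q"
  assumes N: "N \<ge> 2"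
    and Y_sym: "\<And>l. transpose (Y l) = Y l"
    and S_mean: "S = (1 / real N) *\<^sub>R (\<Sum>l=1..N. Y l)"
    and Y_bound: "\<And>l y. l \<in> {1..N} \<Longrightarrow> qform (Y l) y \<le> M * (norm y)\<^sup>2"
    and S_bound: "\<And>y. qform S y \<le> s * (norm y)\<^sup>2"
  shows "loewner_le
     ((1 / fact N) *\<^sub>R (\<Sum>\<pi>\<in>{\<pi>. \<pi> permutes {1..N}}. \<Sum>k=1..N.
         B (\<pi> k) ** ((1 / real (N + 1 - k)) *\<^sub>R (\<Sum>i=k..N. Y (\<pi> i))) ** transpose (B (\<pi> k))))
     (((s + eps_N N * M) / (1 + eps_N N)) *\<^sub>R (\<Sum>k=1..N. B k ** transpose (B k)))"
    (is "loewner_le ?L ?R")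
proof (rule loewner_le_qformI)
  show "transpose ?L = ?L"
    by (simp add: transpose_sum transpose_scalar matrix_transpose_mul Y_sym matrix_mul_assoc)
  show "transpose ?R = ?R"
    by (simp add: transpose_sum transpose_scalar matrix_transpose_mul)
next
  fix x
  define z where "z j = transpose (B j) *v x" for j
  define g where "g j l = qform (Y l) (z j)" for j l
  define Z where "Z = (\<Sum>j=1..N. (norm (z j))\<^sup>2)"
  have H: "(harm N :: real) - 1 \<ge> 0" "real N - harm N \<ge> 0" "real N - 1 > 0"
    using N harm_ge_one[of N] harm_less_of_nat[OF N] by auto
  have diagonal: "(\<Sum>j=1..N. g j j) \<le> M * Z"
    unfolding Z_def sum_distrib_left g_def by (intro sum_mono Y_bound)
  have full: "(\<Sum>j=1..N. \<Sum>l=1..N. g j l) / real N \<le> s * Z"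
  proof -
    have "(\<Sum>j=1..N. \<Sum>l=1..N. g j l) / real N = (\<Sum>j=1..N. qform S (z j))"
      unfolding S_mean g_def by (simp add: sum_divide_distrib)
    also have "\<dots> \<le> s * Z"
      unfolding Z_def sum_distrib_left by (intro sum_mono S_bound)
    finally show ?thesis .
  qed
  have "qform ?L x
      = (1 / fact N) * (\<Sum>\<pi>\<in>{\<pi>. \<pi> permutes {1..N}}. \<Sum>k=1..N.
           (1 / real (N + 1 - k)) * (\<Sum>i=k..N. g (\<pi> k) (\<pi> i)))"
    by (simp add: g_def z_def)
  also have "\<dots> = ((harm N - 1) * (\<Sum>j=1..N. g j j)
        + (real N - harm N) * ((\<Sum>j=1..N. \<Sum>l=1..N. g j l) / real N)) / (real N - 1)"
    by (rule permutation_average_suffix_means[OF N])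
  also have "\<dots> \<le> ((harm N - 1) * (M * Z) + (real N - harm N) * (s * Z)) / (real N - 1)"
    using H diagonal full by (intro divide_right_mono add_mono mult_left_mono) simp_all
  also have "\<dots> = ((s + eps_N N * M) / (1 + eps_N N)) * Z"
    unfolding eps_N_weighted_mean[OF N] by (simp add: algebra_simps)
  also have "\<dots> = qform ?R x"
    by (simp add: Z_def z_def qform_gram)
  finally show "qform ?L x \<le> qform ?R x" .
qed

lemma loewner_le_SigmaPi_l:
  fixes W :: "nat \<Rightarrow> real^'q^'p" and X :: "nat \<Rightarrow> real^'r^'q"
  assumes "N \<ge> 2"
  shows "loewner_le
           ((1 / fact N) *\<^sub>R (\<Sum>\<pi>\<in>{\<pi>. \<pi> permutes {1..N}}. \<Sum>k=1..N.
               W (\<pi> k) ** SigmaPi_l N X \<pi> k ** transpose (W (\<pi> k))))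
           ((sigma2_l N X / (1 + eps_N N)) *\<^sub>R (\<Sum>k=1..N. W k ** transpose (W k)))"
proof -
  let ?M = "Max ((\<lambda>k. (opnorm (X k - mat_mean N X))\<^sup>2) ` {1..N})"
  have Y_bound: "qform ((X l - mat_mean N X) ** transpose (X l - mat_mean N X)) y \<le> ?M * (norm y)\<^sup>2"
    if "l \<in> {1..N}" for l y
    using that by (intro order.trans[OF qform_gram_le_opnorm] mult_right_mono Max_ge) auto
  show ?thesis
    unfolding SigmaPi_l_def sigma2_l_def
    by (rule loewner_le_permutation_suffix_average[OF assms _ _ Y_bound qform_le_opnorm])
      (simp_all add: matrix_transpose_mul Sigma_l_def)
qed

lemma mat_mean_transpose: "mat_mean N (\<lambda>k. transpose (X k)) = transpose (mat_mean N X)"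
  by (simp add: mat_mean_def transpose_sum transpose_scalar)

lemma SigmaPi_r_eq_SigmaPi_l_transpose:
  "SigmaPi_r N X \<pi> k = SigmaPi_l N (\<lambda>k. transpose (X k)) \<pi> k"
  by (simp add: SigmaPi_l_def SigmaPi_r_def mat_mean_transpose transpose_diff)

lemma sigma2_r_eq_sigma2_l_transpose: "sigma2_r N X = sigma2_l N (\<lambda>k. transpose (X k))"
  by (simp add: sigma2_l_def sigma2_r_def Sigma_l_def Sigma_r_def mat_mean_transpose
      transpose_diff[symmetric] opnorm_transpose)

theorem lemma11:
  fixes N :: nat
    and W :: "nat \<Rightarrow> real^'q^'p"
    and X :: "nat \<Rightarrow> real^'r^'q"
    and Xt :: "nat \<Rightarrow> real^'qt^'p"
    and V :: "nat \<Rightarrow> real^'r^'qt"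
  assumes "N \<ge> 2"
  shows "loewner_le
           ((1 / fact N) *\<^sub>R (\<Sum>\<pi>\<in>{\<pi>. \<pi> permutes {1..N}}. \<Sum>k=1..N.
               W (\<pi> k) ** SigmaPi_l N X \<pi> k ** transpose (W (\<pi> k))))
           ((sigma2_l N X / (1 + eps_N N)) *\<^sub>R (\<Sum>k=1..N. W k ** transpose (W k)))
       \<and> loewner_le
           ((1 / fact N) *\<^sub>R (\<Sum>\<pi>\<in>{\<pi>. \<pi> permutes {1..N}}. \<Sum>k=1..N.
               transpose (V (\<pi> k)) ** SigmaPi_r N Xt \<pi> k ** V (\<pi> k)))
           ((sigma2_r N Xt / (1 + eps_N N)) *\<^sub>R (\<Sum>k=1..N. transpose (V k) ** V k))"
  using loewner_le_SigmaPi_l[OF assms, of W X]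
    loewner_le_SigmaPi_l[OF assms, of "\<lambda>k. transpose (V k)" "\<lambda>k. transpose (Xt k)"]
  by (simp add: SigmaPi_r_eq_SigmaPi_l_transpose sigma2_r_eq_sigma2_l_transpose)

end
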